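(* Let $X$ be a completely metrizable space with the $\overline{DD}^{\{0,0\}}$-property. Then $X\in AP(1,0)$.
   Context: All spaces are metrizable and maps continuous. For an open cover $\mathcal U$ of $M$, maps $f,f'\colon Z\to M$ are $\mathcal U$-homotopic if there is a homotopy $h\colon Z\times[0,1]\to M$ from $f$ to $f'$ such that each path $h(\{z\}\times[0,1])$ lies in some member of $\mathcal U$. $M$ has the $\overline{DD}^{\{n,k\}}$-property if for every open cover $\mathcal U$ of $M$ and maps $f\colon\mathbb I^n\to M$, $g\colon\mathbb I^k\to M$ there exist maps $f'\colon \mathbb I^n\to M$, $g'\colon\mathbb I^k\to M$, $\mathcal U$-homotopic to $f$ and $g$ respectively, with $f'(\mathbb I^n)\cap g'(\mathbb I^k)=\emptyset$ (here $\mathbb I^0$ is a point). A map is $0$-dimensional if all fibers have dimension $\le0$. $X\in AP(1,0)$ means: for every $\varepsilon>0$ and map $g\colon\mathbb I\to X$ there is a $0$-dimensional map $g'\colon\mathbb I\to X$ connected to $g$ by a homotopy $h$ with $\mathrm{diam}\,h(\{t\}\times[0,1])<\varepsilon$ for all $t$ (w.r.t. a compatible metric). *)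

theory Defs
  imports "HOL-Analysis.Analysis"
begin

text \<open>The cube I^n as a topological space (I^0 is a one-point space).\<close>
definition cube_top :: "nat \<Rightarrow> (nat \<Rightarrow> real) topology" where
  "cube_top n = subtopology (powertop_real {..<n}) (PiE {..<n} (\<lambda>_. {0..1}))"

definition U_homotopic :: "'b topology \<Rightarrow> 'a topology \<Rightarrow> 'a set set \<Rightarrow> ('b \<Rightarrow> 'a) \<Rightarrow> ('b \<Rightarrow> 'a) \<Rightarrow> bool" where
  "U_homotopic Z M \<U> f f' \<longleftrightarrow>
     (\<exists>h. continuous_map (prod_topology Z (top_of_set {0..1::real})) M h \<and>
          (\<forall>z\<in>topspace Z. h (z, 0) = f z \<and> h (z, 1) = f' z) \<and>
          (\<forall>z\<in>topspace Z. \<exists>W\<in>\<U>. (\<lambda>t::real. h (z, t)) ` {0..1} \<subseteq> W))"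

definition open_cover :: "'a topology \<Rightarrow> 'a set set \<Rightarrow> bool" where
  "open_cover M \<U> \<longleftrightarrow> (\<forall>W\<in>\<U>. openin M W) \<and> \<Union>\<U> = topspace M"

definition DD_property :: "'a topology \<Rightarrow> nat \<Rightarrow> nat \<Rightarrow> bool" where
  "DD_property M n k \<longleftrightarrow>
     (\<forall>\<U> f g. open_cover M \<U> \<and> continuous_map (cube_top n) M f \<and> continuous_map (cube_top k) M g \<longrightarrow>
        (\<exists>f' g'. continuous_map (cube_top n) M f' \<and> continuous_map (cube_top k) M g' \<and>
           U_homotopic (cube_top n) M \<U> f f' \<and> U_homotopic (cube_top k) M \<U> g g' \<and>
           f' ` topspace (cube_top n) \<inter> g' ` topspace (cube_top k) = {}))"

definition zero_dim_map :: "'b topology \<Rightarrow> ('b \<Rightarrow> 'a) \<Rightarrow> bool" where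
  "zero_dim_map Z g \<longleftrightarrow> (\<forall>x. subtopology Z {z \<in> topspace Z. g z = x} dim_le 0)"

definition mdiam :: "'a metric \<Rightarrow> 'a set \<Rightarrow> real" where
  "mdiam m S = Sup {mdist m x y | x y. x \<in> S \<and> y \<in> S}"

definition AP_1_0 :: "'a metric \<Rightarrow> bool" where
  "AP_1_0 m \<longleftrightarrow>
     (\<forall>\<epsilon>>0. \<forall>g. continuous_map (top_of_set {0..1::real}) (mtopology_of m) g \<longrightarrow>
        (\<exists>g' h. continuous_map (top_of_set {0..1::real}) (mtopology_of m) g' \<and>
               zero_dim_map (top_of_set {0..1::real}) g' \<and>
               continuous_map (prod_topology (top_of_set {0..1::real}) (top_of_set {0..1::real})) (mtopology_of m) h \<and>
               (\<forall>t\<in>{0..1}. h (t, 0) = g t \<and> h (t, 1) = g' t) \<and>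
               (\<forall>t\<in>{0..1}. mdiam m ((\<lambda>s. h (t, s)) ` {0..1}) < \<epsilon>)))"

end

theory Submission
  imports Defs
begin

text \<open>Adding a complete compatible metric to the given one yields a complete compatible metric d
  that dominates it, so it suffices to deform a path g through d-small paths into a path that is
  constant on no subinterval of [0, 1]: the fibres of such a path are closed sets containing no
  interval, hence zero-dimensional. Applied to two copies of a point x and a cover by small balls,
  the \<open>DD^{0,0}\<close>-property yields a small path that starts at x and leaves it; splicing it
  into a path that is constant on an interval J makes the path nonconstant on J. Doing this
  successively for an enumeration J_0, J_1, ... of the rational intervals, with displacements
  b_k that at least halve at each step and stay below a quarter of the oscillation created on
  J_k, gives a d-Cauchy sequence of paths whose limit is still nonconstant on every J_k;
  running the k-th homotopy on [1 - 2^-k, 1 - 2^-(k+1)] gives a homotopy to the limit that moves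
  no point farther than b_0.\<close>

lemma mdist_self [simp]: "x \<in> mspace m \<Longrightarrow> mdist m x x = 0"
  by (simp add: Metric_space.mdist_zero)

lemma mball_of_subset_mspace: "mball_of m x r \<subseteq> mspace m"
  by (simp add: mball_of_def Metric_space.mball_subset_mspace)

lemma openin_mtopology_of:
  "openin (mtopology_of m) U \<longleftrightarrow> U \<subseteq> mspace m \<and> (\<forall>x\<in>U. \<exists>r>0. mball_of m x r \<subseteq> U)"
  by (auto simp: mtopology_of_def mball_of_def Metric_space.openin_mtopology)

lemma openin_mball_of: "openin (mtopology_of m) (mball_of m x r)"
  by (simp add: mtopology_of_def mball_of_def Metric_space.openin_mball)

lemma continuous_map_in_mspace:
  "continuous_map (top_of_set S) X f \<Longrightarrow> mtopology_of d = X \<Longrightarrow> t \<in> S \<Longrightarrow> f t \<in> mspace d"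
  using continuous_map_image_subset_topspace by fastforce

lemma continuous_map_top_of_set_compose:
  assumes "continuous_on S \<phi>" "\<phi> ` S \<subseteq> T" "continuous_map (top_of_set T) X \<alpha>"
  shows "continuous_map (top_of_set S) X (\<lambda>z. \<alpha> (\<phi> z))"
proof -
  have "continuous_map (top_of_set S) (top_of_set T) \<phi>"
    using assms(1,2) by (simp add: continuous_map_in_subtopology image_subset_iff)
  from continuous_map_compose[OF this assms(3)] show ?thesis
    by (simp add: o_def)
qed

lemma subtopology_top_of_set_Collect:
  "subtopology (top_of_set S) {z \<in> topspace (top_of_set S). P z} = top_of_set {z \<in> S. P z}"
  by (simp add: subtopology_subtopology Int_absorb1 subset_eq)

lemma mdiam_le:
  assumes "S \<noteq> {}" "S \<subseteq> mspace m" "x \<in> mspace m" "\<And>y. y \<in> S \<Longrightarrow> mdist m y x \<le> c"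
  shows "mdiam m S \<le> 2 * c"
  unfolding mdiam_def
proof (rule cSup_least)
  show "{mdist m y z |y z. y \<in> S \<and> z \<in> S} \<noteq> {}"
    using assms(1) by blast
  fix r assume "r \<in> {mdist m y z |y z. y \<in> S \<and> z \<in> S}"
  then obtain y z where yz: "y \<in> S" "z \<in> S" "r = mdist m y z"
    by blast
  have "mdist m y z \<le> mdist m y x + mdist m x z"
    using yz assms(2,3) by (intro mdist_triangle) auto
  then show "r \<le> 2 * c"
    using assms(4)[OF yz(1)] assms(4)[OF yz(2)] yz(3) by (simp add: mdist_commute)
qed

section \<open>Sums of metrics\<close>

definition sum_metric :: "'a metric \<Rightarrow> 'a metric \<Rightarrow> 'a metric" where
  "sum_metric m1 m2 = metric (mspace m1 \<inter> mspace m2, \<lambda>x y. mdist m1 x y + mdist m2 x y)"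

lemma Metric_space_sum:
  "Metric_space (mspace m1 \<inter> mspace m2) (\<lambda>x y. mdist m1 x y + mdist m2 x y)"
proof
  fix x y z
  assume "x \<in> mspace m1 \<inter> mspace m2" "y \<in> mspace m1 \<inter> mspace m2" "z \<in> mspace m1 \<inter> mspace m2"
  then show "mdist m1 x z + mdist m2 x z \<le> (mdist m1 x y + mdist m2 x y) + (mdist m1 y z + mdist m2 y z)"
    using mdist_triangle[of x m1 y z] mdist_triangle[of x m2 y z] by auto
qed (auto simp: mdist_commute add_nonneg_eq_0_iff)

lemma mspace_sum_metric [simp]: "mspace (sum_metric m1 m2) = mspace m1 \<inter> mspace m2"
  and mdist_sum_metric [simp]: "mdist (sum_metric m1 m2) x y = mdist m1 x y + mdist m2 x y"
  by (simp_all add: sum_metric_def Metric_space.mspace_metric Metric_space.mdist_metric Metric_space_sum)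

lemma mtopology_of_sum_metric:
  assumes m1: "mtopology_of m1 = X" and m2: "mtopology_of m2 = X"
  shows "mtopology_of (sum_metric m1 m2) = X"
proof -
  have sp: "mspace m1 = topspace X" "mspace m2 = topspace X"
    using m1 m2 topspace_mtopology_of by metis+
  have "openin X U" if U: "openin (mtopology_of (sum_metric m1 m2)) U" for U
  proof (subst openin_subopen, intro ballI)
    fix x assume "x \<in> U"
    then obtain r where "r > 0" and r: "mball_of (sum_metric m1 m2) x r \<subseteq> U"
      using U by (auto simp: openin_mtopology_of)
    have "x \<in> mspace m1" "x \<in> mspace m2"
      using \<open>x \<in> U\<close> U sp by (auto simp: openin_mtopology_of)
    then have "x \<in> mball_of m1 x (r/2) \<inter> mball_of m2 x (r/2)"
      using \<open>r > 0\<close> by auto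
    moreover have "openin X (mball_of m1 x (r/2) \<inter> mball_of m2 x (r/2))"
      using openin_mball_of[of m1] openin_mball_of[of m2] m1 m2 by (simp add: openin_Int)
    moreover have "mball_of m1 x (r/2) \<inter> mball_of m2 x (r/2) \<subseteq> mball_of (sum_metric m1 m2) x r"
      by auto
    ultimately show "\<exists>T. openin X T \<and> x \<in> T \<and> T \<subseteq> U"
      using r by blast
  qed
  moreover have "openin (mtopology_of (sum_metric m1 m2)) U" if "openin X U" for U
  proof -
    have "U \<subseteq> topspace X" "\<forall>x\<in>U. \<exists>r>0. mball_of m1 x r \<subseteq> U"
      using that by (auto simp: openin_mtopology_of m1[symmetric])
    moreover have "mball_of (sum_metric m1 m2) x r \<subseteq> mball_of m1 x r" for x r
      by auto (smt (verit) mdist_nonneg)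
    ultimately show ?thesis
      by (auto simp: openin_mtopology_of sp) (meson order_trans)
  qed
  ultimately show ?thesis
    by (auto simp: topology_eq)
qed

lemma mcomplete_of_sum_metric:
  assumes m1: "mtopology_of m1 = X" and m2: "mtopology_of m2 = X" and "mcomplete_of m2"
  shows "mcomplete_of (sum_metric m1 m2)"
proof -
  interpret S: Metric_space "mspace (sum_metric m1 m2)" "mdist (sum_metric m1 m2)"
    by (rule Metric_space_mspace_mdist)
  interpret M2: Metric_space "mspace m2" "mdist m2"
    by simp
  have "\<exists>x. limitin X \<sigma> x sequentially" if \<sigma>: "S.MCauchy \<sigma>" for \<sigma>
  proof -
    have "M2.MCauchy \<sigma>"
      using \<sigma> unfolding S.MCauchy_def M2.MCauchy_def
      by (smt (verit, ccfv_threshold) Int_iff image_subset_iff mdist_nonneg mdist_sum_metric mspace_sum_metric)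
    then show ?thesis
      using \<open>mcomplete_of m2\<close> m2 by (auto simp: mcomplete_of_def M2.mcomplete_def mtopology_of_def)
  qed
  then show ?thesis
    using mtopology_of_sum_metric[OF m1 m2]
    unfolding mcomplete_of_def S.mcomplete_def mtopology_of_def by metis
qed

lemma completely_metrizable_space_complete_metric_above:
  assumes "completely_metrizable_space X" and "mtopology_of m = X"
  obtains d where "mtopology_of d = X" "mcomplete_of d" "\<And>x y. mdist m x y \<le> mdist d x y"
proof -
  obtain M \<rho> where "Metric_space M \<rho>" "Metric_space.mcomplete M \<rho>" "X = Metric_space.mtopology M \<rho>"
    using assms(1) unfolding completely_metrizable_space_def by blast
  then have "mtopology_of (metric (M, \<rho>)) = X" "mcomplete_of (metric (M, \<rho>))"
    by (simp_all add: Metric_space.mtopology_of Metric_space.mcomplete_of)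
  then show thesis
    using that[of "sum_metric m (metric (M, \<rho>))"] assms(2)
    by (simp add: mtopology_of_sum_metric mcomplete_of_sum_metric)
qed

section \<open>Paths of the interval that are constant on no subinterval\<close>

lemma dim_le_0_if_no_interval:
  fixes S :: "real set"
  assumes no_interval: "\<And>a b. a < b \<Longrightarrow> \<not> {a..b} \<subseteq> S"
  shows "top_of_set S dim_le 0"
  unfolding dimension_le_0_neighbourhood_base_of_clopen
proof (subst open_neighbourhood_base_of, blast, intro allI impI)
  fix W a assume W: "openin (top_of_set S) W \<and> a \<in> W"
  then obtain r where "r > 0" and r: "S \<inter> ball a r \<subseteq> W"
    unfolding openin_contains_ball by blast
  have a: "a \<in> S"
    using W openin_imp_subset by fastforce
  obtain u where u: "u \<in> {a - r/2..a}" "u \<notin> S"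
    using no_interval[of "a - r/2" a] \<open>r > 0\<close> by (auto simp: subset_iff)
  obtain v where v: "v \<in> {a..a + r/2}" "v \<notin> S"
    using no_interval[of a "a + r/2"] \<open>r > 0\<close> by (auto simp: subset_iff)
  have uv: "u < a" "a < v"
    using u v a by (metis atLeastAtMost_iff order_le_imp_less_or_eq)+
  have "S \<inter> {u<..<v} = S \<inter> {u..v}"
    using u v by (auto simp: less_eq_real_def)
  moreover have "closedin (top_of_set S) (S \<inter> {u..v})"
    by (simp add: closedin_closed_Int)
  moreover have "openin (top_of_set S) (S \<inter> {u<..<v})"
    by (simp add: openin_open_Int)
  ultimately have "closedin (top_of_set S) (S \<inter> {u<..<v}) \<and> openin (top_of_set S) (S \<inter> {u<..<v})"
    by simp
  moreover have "S \<inter> {u<..<v} \<subseteq> W"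
  proof -
    have "{u<..<v} \<subseteq> ball a r"
      using u v \<open>r > 0\<close> by (auto simp: dist_real_def)
    then show ?thesis
      using r by blast
  qed
  moreover have "a \<in> S \<inter> {u<..<v}"
    using a uv by simp
  ultimately show "\<exists>U. (closedin (top_of_set S) U \<and> openin (top_of_set S) U) \<and> a \<in> U \<and> U \<subseteq> W"
    by blast
qed

lemma zero_dim_map_if_nowhere_constant:
  assumes "\<And>a b. 0 \<le> a \<Longrightarrow> a < b \<Longrightarrow> b \<le> 1 \<Longrightarrow> \<exists>u\<in>{a..b}. \<exists>v\<in>{a..b}. f u \<noteq> f v"
  shows "zero_dim_map (top_of_set {0..1::real}) f"
  unfolding zero_dim_map_def
proof
  fix x
  have "top_of_set {z \<in> {0..1}. f z = x} dim_le 0"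
  proof (rule dim_le_0_if_no_interval)
    fix a b :: real assume "a < b"
    show "\<not> {a..b} \<subseteq> {z \<in> {0..1}. f z = x}"
    proof
      assume ab: "{a..b} \<subseteq> {z \<in> {0..1}. f z = x}"
      moreover have "a \<in> {a..b}" "b \<in> {a..b}"
        using \<open>a < b\<close> by auto
      ultimately have "a \<in> {0..1}" "b \<in> {0..1}"
        by blast+
      then obtain u v where "u \<in> {a..b}" "v \<in> {a..b}" "f u \<noteq> f v"
        using assms[of a b] \<open>a < b\<close> by auto
      moreover have "f u = x" "f v = x"
        using ab \<open>u \<in> {a..b}\<close> \<open>v \<in> {a..b}\<close> by blast+
      ultimately show False
        by simp
    qed
  qed
  then show "subtopology (top_of_set {0..1}) {z \<in> topspace (top_of_set {0..1}). f z = x} dim_le 0"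
    by (simp add: subtopology_subtopology Int_absorb1 subset_eq)
qed

text \<open>Decoding k as a pair (i, n), these are the intervals [i/(n+1), (i+1)/(n+1)]; the
  min makes every k denote one of them (with i \<le> n).\<close>

definition grid_lo :: "nat \<Rightarrow> real" where
  "grid_lo k = (case prod_decode k of (i, n) \<Rightarrow> real (min i n) / real (n + 1))"

definition grid_hi :: "nat \<Rightarrow> real" where
  "grid_hi k = (case prod_decode k of (i, n) \<Rightarrow> (real (min i n) + 1) / real (n + 1))"

lemma grid_bounds: "0 \<le> grid_lo k" "grid_lo k < grid_hi k" "grid_hi k \<le> 1"
proof -
  obtain i n where d: "prod_decode k = (i, n)"
    by (cases "prod_decode k")
  have "real (min i n) + 1 \<le> real n + 1"
    by simp
  then show "0 \<le> grid_lo k" "grid_lo k < grid_hi k" "grid_hi k \<le> 1"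
    unfolding grid_lo_def grid_hi_def d by (auto simp: divide_simps)
qed

lemma grid_subset_interval:
  assumes "0 \<le> a" "a < b" "b \<le> 1"
  obtains k where "a \<le> grid_lo k" "grid_hi k \<le> b"
proof -
  obtain n :: nat where "2 / (b - a) < real n"
    using reals_Archimedean2 by blast
  then have N: "2 < (b - a) * (real n + 1)"
    using assms by (simp add: field_simps)
  define i where "i = nat \<lceil>a * (real n + 1)\<rceil>"
  have i1: "a * (real n + 1) \<le> real i"
    unfolding i_def by linarith
  have "real i < a * (real n + 1) + 1"
    unfolding i_def using assms by (simp add: of_nat_nat) linarith
  then have i2: "real i + 1 < b * (real n + 1)"
    using N by (simp add: algebra_simps)
  then have "real i < real n"
    using assms N by (smt (verit) mult_left_le_one_le of_nat_0_le_iff)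
  then have d: "prod_decode (prod_encode (i, n)) = (i, n)" and mi: "min i n = i"
    by simp_all
  show thesis
    by (rule that[of "prod_encode (i, n)"])
      (use i1 i2 in \<open>simp_all add: grid_lo_def grid_hi_def d mi field_simps\<close>)
qed

section \<open>Splicing a path into a homotopy\<close>

definition tent :: "real \<Rightarrow> real \<Rightarrow> real \<Rightarrow> real" where
  "tent p q t = 1 - \<bar>2 * t - p - q\<bar> / (q - p)"

lemma tent_nonneg_iff: "p < q \<Longrightarrow> 0 \<le> tent p q t \<longleftrightarrow> t \<in> {p..q}"
  by (auto simp: tent_def field_simps abs_le_iff)

lemma tent_le_1: "p < q \<Longrightarrow> tent p q t \<le> 1"
  by (simp add: tent_def)

lemma tent_endpoints: "p < q \<Longrightarrow> tent p q p = 0" "p < q \<Longrightarrow> tent p q ((p + q) / 2) = 1"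
  by (simp_all add: tent_def field_simps)

text \<open>Over [p, q] the path f is replaced by the path \<alpha> run up to height s along a tent, so
  at time s = 1 the loop \<alpha> followed by its reverse has been inserted into f.\<close>

definition splice_homotopy :: "real \<Rightarrow> real \<Rightarrow> (real \<Rightarrow> 'a) \<Rightarrow> (real \<Rightarrow> 'a) \<Rightarrow> real \<times> real \<Rightarrow> 'a" where
  "splice_homotopy p q \<alpha> f z =
     (if 0 \<le> tent p q (fst z) then \<alpha> (snd z * tent p q (fst z)) else f (fst z))"

lemma continuous_map_splice_homotopy:
  assumes f: "continuous_map (top_of_set {0..1}) X f" and \<alpha>: "continuous_map (top_of_set {0..1}) X \<alpha>"
    and "p < q" and "f p = \<alpha> 0" "f q = \<alpha> 0"
  shows "continuous_map (top_of_set ({0..1} \<times> {0..1})) X (splice_homotopy p q \<alpha> f)"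
  unfolding splice_homotopy_def
proof (rule continuous_map_cases_le)
  let ?D = "{0..1::real} \<times> {0..1::real}"
  show "continuous_map (top_of_set ?D) euclideanreal (\<lambda>z. 0)"
    by simp
  show "continuous_map (top_of_set ?D) euclideanreal (\<lambda>z. tent p q (fst z))"
    unfolding continuous_map_iff_continuous tent_def using \<open>p < q\<close> by (intro continuous_intros) auto
  have "continuous_map (top_of_set {z \<in> ?D. 0 \<le> tent p q (fst z)}) X (\<lambda>z. \<alpha> (snd z * tent p q (fst z)))"
  proof (rule continuous_map_top_of_set_compose[OF _ _ \<alpha>])
    show "continuous_on {z \<in> ?D. 0 \<le> tent p q (fst z)} (\<lambda>z. snd z * tent p q (fst z))"
      unfolding tent_def using \<open>p < q\<close> by (intro continuous_intros) auto
    have "s * tent p q t \<in> {0..1}" if "s \<in> {0..1}" "0 \<le> tent p q t" for s t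
      using that tent_le_1[OF \<open>p < q\<close>, of t] mult_le_one[of s "tent p q t"] by simp
    then show "(\<lambda>z. snd z * tent p q (fst z)) ` {z \<in> ?D. 0 \<le> tent p q (fst z)} \<subseteq> {0..1}"
      by auto
  qed
  then show "continuous_map (subtopology (top_of_set ?D) {z \<in> topspace (top_of_set ?D). 0 \<le> tent p q (fst z)}) X
      (\<lambda>z. \<alpha> (snd z * tent p q (fst z)))"
    by (simp only: subtopology_top_of_set_Collect)
  have "continuous_map (top_of_set ?D) X (\<lambda>z. f (fst z))"
    by (rule continuous_map_top_of_set_compose[OF _ _ f]) (auto intro: continuous_intros)
  then show "continuous_map (subtopology (top_of_set ?D) {z \<in> topspace (top_of_set ?D). tent p q (fst z) \<le> 0}) X
      (\<lambda>z. f (fst z))"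
    by (rule continuous_map_from_subtopology)
  fix z :: "real \<times> real" assume "0 = tent p q (fst z)"
  then have "fst z = p \<or> fst z = q"
    using \<open>p < q\<close> by (auto simp: tent_def field_simps abs_if split: if_splits)
  then show "\<alpha> (snd z * tent p q (fst z)) = f (fst z)"
    using \<open>0 = tent p q (fst z)\<close> assms(4,5) by auto
qed

lemma splice_homotopy_start: "p < q \<Longrightarrow> (\<And>t. t \<in> {p..q} \<Longrightarrow> f t = \<alpha> 0) \<Longrightarrow> splice_homotopy p q \<alpha> f (t, 0) = f t"
  by (simp add: splice_homotopy_def tent_nonneg_iff)

lemma splice_homotopy_cases:
  assumes "p < q" "s \<in> {0..1}"
  shows "splice_homotopy p q \<alpha> f (t, s) = f t \<or> (t \<in> {p..q} \<and> splice_homotopy p q \<alpha> f (t, s) \<in> \<alpha> ` {0..1})"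
proof (cases "0 \<le> tent p q t")
  case True
  then have "s * tent p q t \<in> {0..1}"
    using assms tent_le_1[of p q t] mult_le_one[of s "tent p q t"] by simp
  then show ?thesis
    using True assms(1) by (simp add: splice_homotopy_def tent_nonneg_iff)
qed (simp add: splice_homotopy_def)

lemma mdist_splice_homotopy:
  assumes "p < q" "s \<in> {0..1}" "f t \<in> mspace d" "c > 0"
    and "\<And>u. u \<in> {p..q} \<Longrightarrow> f u = \<alpha> 0" "\<And>u. u \<in> {0..1} \<Longrightarrow> mdist d (\<alpha> u) (\<alpha> 0) < c"
  shows "mdist d (splice_homotopy p q \<alpha> f (t, s)) (f t) < c"
  using splice_homotopy_cases[OF assms(1,2), of \<alpha> f t]
proof
  assume "splice_homotopy p q \<alpha> f (t, s) = f t"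
  then show ?thesis
    using assms(3,4) by simp
next
  assume "t \<in> {p..q} \<and> splice_homotopy p q \<alpha> f (t, s) \<in> \<alpha> ` {0..1}"
  then show ?thesis
    using assms(5,6) by auto
qed

lemma splice_homotopy_end_nonconstant:
  "p < q \<Longrightarrow> \<alpha> 1 \<noteq> \<alpha> 0 \<Longrightarrow> splice_homotopy p q \<alpha> f (p, 1) \<noteq> splice_homotopy p q \<alpha> f ((p + q) / 2, 1)"
  by (simp add: splice_homotopy_def tent_endpoints)

section \<open>Consequences of the \<open>DD^{0,0}\<close>-property\<close>

lemma topspace_cube_top_0: "topspace (cube_top 0) = {\<lambda>_. undefined}"
  by (simp add: cube_top_def PiE_empty_domain)

lemma U_homotopic_from_point:
  assumes "U_homotopic (cube_top 0) X \<U> (\<lambda>_. x) k"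
  obtains \<alpha> W where "continuous_map (top_of_set {0..1::real}) X \<alpha>" "\<alpha> 0 = x" "\<alpha> 1 = k (\<lambda>_. undefined)"
    "W \<in> \<U>" "\<alpha> ` {0..1} \<subseteq> W"
proof -
  let ?pt = "\<lambda>_::nat. undefined :: real"
  obtain h where h: "continuous_map (prod_topology (cube_top 0) (top_of_set {0..1::real})) X h"
    and ends: "\<forall>z\<in>topspace (cube_top 0). h (z, 0) = x \<and> h (z, 1) = k z"
    and W: "\<forall>z\<in>topspace (cube_top 0). \<exists>W\<in>\<U>. (\<lambda>t. h (z, t)) ` {0..1} \<subseteq> W"
    using assms unfolding U_homotopic_def by blast
  have "continuous_map (top_of_set {0..1::real}) (prod_topology (cube_top 0) (top_of_set {0..1::real})) (\<lambda>t. (?pt, t))"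
    by (intro continuous_map_pairedI) (simp_all add: topspace_cube_top_0)
  then have "continuous_map (top_of_set {0..1::real}) X (\<lambda>t. h (?pt, t))"
    using continuous_map_compose[OF _ h] by (simp add: o_def)
  moreover have "h (?pt, 0) = x" "h (?pt, 1) = k ?pt"
    using ends topspace_cube_top_0 by simp_all
  moreover obtain W' where "W' \<in> \<U>" "(\<lambda>t. h (?pt, t)) ` {0..1} \<subseteq> W'"
    using W topspace_cube_top_0 by blast
  ultimately show thesis
    by (rule that)
qed

lemma DD00_escaping_path:
  assumes DD: "DD_property X 0 0" and "open_cover X \<U>" "x \<in> topspace X"
  obtains \<alpha> W where "continuous_map (top_of_set {0..1::real}) X \<alpha>" "\<alpha> 0 = x" "\<alpha> 1 \<noteq> x"
    "W \<in> \<U>" "\<alpha> ` {0..1} \<subseteq> W"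
proof -
  let ?pt = "\<lambda>_::nat. undefined :: real"
  have "continuous_map (cube_top 0) X (\<lambda>_. x)"
    using assms(3) by simp
  then obtain f g where f: "U_homotopic (cube_top 0) X \<U> (\<lambda>_. x) f"
    and g: "U_homotopic (cube_top 0) X \<U> (\<lambda>_. x) g"
    and disjoint: "f ` topspace (cube_top 0) \<inter> g ` topspace (cube_top 0) = {}"
    using DD \<open>open_cover X \<U>\<close> unfolding DD_property_def by blast
  have "f ?pt \<noteq> g ?pt"
    using disjoint by (auto simp: topspace_cube_top_0)
  then obtain k where k: "U_homotopic (cube_top 0) X \<U> (\<lambda>_. x) k" "k ?pt \<noteq> x"
    using f g by metis
  obtain \<alpha> W where "continuous_map (top_of_set {0..1::real}) X \<alpha>" "\<alpha> 0 = x" "\<alpha> 1 = k ?pt"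
    "W \<in> \<U>" "\<alpha> ` {0..1} \<subseteq> W"
    by (rule U_homotopic_from_point[OF k(1)])
  with k(2) show thesis
    using that by metis
qed

lemma DD00_small_escaping_path:
  assumes DD: "DD_property X 0 0" and d: "mtopology_of d = X" and "x \<in> topspace X" "r > 0"
  obtains \<alpha> where "continuous_map (top_of_set {0..1::real}) X \<alpha>" "\<alpha> 0 = x" "\<alpha> 1 \<noteq> x"
    "\<And>u. u \<in> {0..1} \<Longrightarrow> mdist d (\<alpha> u) x < r"
proof -
  have sp: "mspace d = topspace X"
    using d by auto
  have "open_cover X ((\<lambda>y. mball_of d y (r/2)) ` topspace X)"
    unfolding open_cover_def
  proof
    show "\<forall>W\<in>(\<lambda>y. mball_of d y (r/2)) ` topspace X. openin X W"
      using openin_mball_of[of d] unfolding d by blast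
    have "mball_of d y (r/2) \<subseteq> topspace X" for y
      using mball_of_subset_mspace sp by metis
    moreover have "z \<in> mball_of d z (r/2)" if "z \<in> topspace X" for z
      using that sp \<open>r > 0\<close> by simp
    ultimately show "\<Union> ((\<lambda>y. mball_of d y (r/2)) ` topspace X) = topspace X"
      by blast
  qed
  then obtain \<alpha> W where \<alpha>: "continuous_map (top_of_set {0..1::real}) X \<alpha>" "\<alpha> 0 = x" "\<alpha> 1 \<noteq> x"
    and W: "W \<in> (\<lambda>y. mball_of d y (r/2)) ` topspace X" "\<alpha> ` {0..1} \<subseteq> W"
    by (rule DD00_escaping_path[OF DD _ \<open>x \<in> topspace X\<close>])
  from W(1) obtain y where y: "W = mball_of d y (r/2)"
    by blast
  have small: "mdist d (\<alpha> u) x < r" if "u \<in> {0..1}" for u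
  proof -
    have "\<alpha> u \<in> \<alpha> ` {0..1}" "\<alpha> 0 \<in> \<alpha> ` {0..1}"
      using that by auto
    then have "\<alpha> u \<in> mball_of d y (r/2)" "\<alpha> 0 \<in> mball_of d y (r/2)"
      using W(2) unfolding y by (meson subsetD)+
    then have "mdist d y (\<alpha> u) < r/2" "mdist d y x < r/2" "\<alpha> u \<in> mspace d" "x \<in> mspace d" "y \<in> mspace d"
      using \<alpha>(2) by auto
    then show ?thesis
      using mdist_triangle[of "\<alpha> u" d y x] mdist_commute[of d y "\<alpha> u"] by linarith
  qed
  show thesis
    by (rule that[OF \<alpha> small])
qed

lemma DD00_nonconstant_perturbation:
  assumes DD: "DD_property X 0 0" and d: "mtopology_of d = X"
    and f: "continuous_map (top_of_set {0..1::real}) X f"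
    and pq: "0 \<le> p" "p < q" "q \<le> 1" and "c > 0"
  obtains K where "continuous_map (top_of_set ({0..1::real} \<times> {0..1::real})) X K"
    "\<And>t. t \<in> {0..1} \<Longrightarrow> K (t, 0) = f t"
    "\<And>t s. t \<in> {0..1} \<Longrightarrow> s \<in> {0..1} \<Longrightarrow> mdist d (K (t, s)) (f t) < c"
    "\<exists>u\<in>{p..q}. \<exists>v\<in>{p..q}. K (u, 1) \<noteq> K (v, 1)"
proof (cases "\<exists>u\<in>{p..q}. \<exists>v\<in>{p..q}. f u \<noteq> f v")
  case True
  show thesis
  proof (rule that[of "\<lambda>z. f (fst z)"])
    show "continuous_map (top_of_set ({0..1::real} \<times> {0..1::real})) X (\<lambda>z. f (fst z))"
      by (rule continuous_map_top_of_set_compose[OF _ _ f]) (auto intro: continuous_intros)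
    show "f (fst (t, 0::real)) = f t" for t
      by simp
    show "\<exists>u\<in>{p..q}. \<exists>v\<in>{p..q}. f (fst (u, 1::real)) \<noteq> f (fst (v, 1::real))"
      using True by simp
    fix t s :: real assume "t \<in> {0..1}"
    then have "f t \<in> mspace d"
      using continuous_map_in_mspace[OF f d] by blast
    then show "mdist d (f (fst (t, s))) (f t) < c"
      using \<open>c > 0\<close> by simp
  qed
next
  case False
  define x where "x = f p"
  have fx: "f u = x" if "u \<in> {p..q}" for u
  proof -
    have "p \<in> {p..q}"
      using pq by simp
    then show ?thesis
      using False that unfolding x_def by blast
  qed
  have "x \<in> topspace X"
    using continuous_map_in_mspace[OF f d, of p] pq d unfolding x_def by auto
  obtain \<alpha> where \<alpha>: "continuous_map (top_of_set {0..1::real}) X \<alpha>" "\<alpha> 0 = x" "\<alpha> 1 \<noteq> x"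
    and small: "\<And>u. u \<in> {0..1} \<Longrightarrow> mdist d (\<alpha> u) x < c"
    using DD00_small_escaping_path[OF DD d \<open>x \<in> topspace X\<close> \<open>c > 0\<close>] by blast
  show thesis
  proof (rule that[of "splice_homotopy p q \<alpha> f"])
    show "continuous_map (top_of_set ({0..1::real} \<times> {0..1::real})) X (splice_homotopy p q \<alpha> f)"
      using pq fx \<alpha>(2) by (intro continuous_map_splice_homotopy[OF f \<alpha>(1)]) simp_all
    show "splice_homotopy p q \<alpha> f (t, 0) = f t" for t
      using pq fx \<alpha>(2) by (intro splice_homotopy_start) auto
    show "mdist d (splice_homotopy p q \<alpha> f (t, s)) (f t) < c" if "t \<in> {0..1}" "s \<in> {0..1}" for t s
      using pq(2) that(2) continuous_map_in_mspace[OF f d that(1)] \<open>c > 0\<close> fx small \<alpha>(2)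
      by (intro mdist_splice_homotopy) auto
    show "\<exists>u\<in>{p..q}. \<exists>v\<in>{p..q}. splice_homotopy p q \<alpha> f (u, 1) \<noteq> splice_homotopy p q \<alpha> f (v, 1)"
      using splice_homotopy_end_nonconstant[OF pq(2), of \<alpha> f] \<alpha>(2,3) pq by force
  qed
qed

lemma DD00_separating_stage:
  assumes DD: "DD_property X 0 0" and d: "mtopology_of d = X"
    and h: "continuous_map (top_of_set {0..1::real}) X h"
    and pq: "0 \<le> p" "p < q" "q \<le> 1" and "c > 0"
  obtains K c' where "continuous_map (top_of_set ({0..1::real} \<times> {0..1::real})) X K"
    "\<And>t. t \<in> {0..1} \<Longrightarrow> K (t, 0) = h t"
    "\<And>t s. t \<in> {0..1} \<Longrightarrow> s \<in> {0..1} \<Longrightarrow> mdist d (K (t, s)) (h t) \<le> c - c'"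
    "0 < c'" "c' \<le> c / 2" "\<exists>u\<in>{p..q}. \<exists>v\<in>{p..q}. 2 * c' < mdist d (K (u, 1)) (K (v, 1))"
proof -
  obtain K where K: "continuous_map (top_of_set ({0..1::real} \<times> {0..1::real})) X K"
    and K0: "\<And>t. t \<in> {0..1} \<Longrightarrow> K (t, 0) = h t"
    and close: "\<And>t s. t \<in> {0..1} \<Longrightarrow> s \<in> {0..1} \<Longrightarrow> mdist d (K (t, s)) (h t) < c / 2"
    and "\<exists>u\<in>{p..q}. \<exists>v\<in>{p..q}. K (u, 1) \<noteq> K (v, 1)"
    using DD00_nonconstant_perturbation[OF DD d h pq, of "c / 2"] \<open>c > 0\<close> by (metis half_gt_zero)
  then obtain u v where uv: "u \<in> {p..q}" "v \<in> {p..q}" "K (u, 1) \<noteq> K (v, 1)"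
    by blast
  define \<delta> where "\<delta> = mdist d (K (u, 1)) (K (v, 1))"
  have "(u, 1::real) \<in> {0..1} \<times> {0..1}" "(v, 1::real) \<in> {0..1} \<times> {0..1}"
    using uv pq by auto
  then have "K (u, 1) \<in> mspace d" "K (v, 1) \<in> mspace d"
    using continuous_map_in_mspace[OF K d] by blast+
  then have "\<delta> \<noteq> 0"
    using uv(3) unfolding \<delta>_def by simp
  then have "\<delta> > 0"
    using mdist_nonneg[of d "K (u, 1)" "K (v, 1)"] unfolding \<delta>_def by linarith
  show thesis
  proof (rule that[OF K K0])
    show "mdist d (K (t, s)) (h t) \<le> c - min (c / 2) (\<delta> / 4)" if "t \<in> {0..1}" "s \<in> {0..1}" for t s
      using close[OF that] by linarith
    show "0 < min (c / 2) (\<delta> / 4)" "min (c / 2) (\<delta> / 4) \<le> c / 2"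
      using \<open>c > 0\<close> \<open>\<delta> > 0\<close> by auto
    show "\<exists>u\<in>{p..q}. \<exists>v\<in>{p..q}. 2 * min (c / 2) (\<delta> / 4) < mdist d (K (u, 1)) (K (v, 1))"
      using uv(1,2) \<open>\<delta> > 0\<close> unfolding \<delta>_def by force
  qed
qed

section \<open>Infinite concatenation of homotopies\<close>

lemma mdist_telescoping:
  assumes x: "\<And>k. x k \<in> mspace m" and x_step: "\<And>k. mdist m (x k) (x (Suc k)) \<le> b k - b (Suc k)"
    and "k \<le> n"
  shows "mdist m (x k) (x n) \<le> b k - b n"
  using \<open>k \<le> n\<close>
proof (induction n rule: dec_induct)
  case base
  show ?case
    using x[of k] by simp
next
  case (step n)
  have "mdist m (x k) (x (Suc n)) \<le> mdist m (x k) (x n) + mdist m (x n) (x (Suc n))"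
    using x by (intro mdist_triangle)
  then show ?case
    using step.IH x_step[of n] by linarith
qed

lemma telescoping_decseq:
  assumes "\<And>k. mdist m (x k) (x (Suc k)) \<le> b k - b (Suc k)"
  shows "decseq b"
  using assms mdist_nonneg by (smt (verit) decseq_SucI)

lemma telescoping_limit:
  assumes complete: "mcomplete_of m" and x: "\<And>k. x k \<in> mspace m"
    and step: "\<And>k. mdist m (x k) (x (Suc k)) \<le> b k - b (Suc k)" and b: "b \<longlonglongrightarrow> 0"
  obtains l where "l \<in> mspace m" "\<And>k. mdist m (x k) l \<le> b k"
proof -
  interpret M: Metric_space "mspace m" "mdist m"
    by simp
  have b_nonneg: "0 \<le> b n" for n
    using decseq_ge[OF telescoping_decseq b] step by blast
  have dist_le: "mdist m (x k) (x n) \<le> b k" if "k \<le> n" for k n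
    using mdist_telescoping[where m=m and x=x and b=b, OF x step that] b_nonneg[of n] by linarith
  have "M.MCauchy x"
    unfolding M.MCauchy_def
  proof (intro conjI allI impI)
    show "range x \<subseteq> mspace m"
      using x by auto
    fix \<epsilon> :: real assume "\<epsilon> > 0"
    then obtain N where N: "\<And>n. n \<ge> N \<Longrightarrow> b n < \<epsilon>"
      using b b_nonneg unfolding lim_sequentially dist_real_def by (metis abs_of_nonneg diff_zero)
    show "\<exists>N. \<forall>n n'. N \<le> n \<longrightarrow> N \<le> n' \<longrightarrow> mdist m (x n) (x n') < \<epsilon>"
    proof (intro exI allI impI)
      fix n n' assume "N \<le> n" "N \<le> n'"
      then show "mdist m (x n) (x n') < \<epsilon>"
        using dist_le[of n n'] dist_le[of n' n] N mdist_commute[of m "x n" "x n'"]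
        by (cases "n \<le> n'") (auto intro: le_less_trans)
    qed
  qed
  then obtain l where l: "limitin M.mtopology x l sequentially"
    using complete unfolding mcomplete_of_def M.mcomplete_def by blast
  have "mdist m (x k) l \<le> b k" for k
  proof (rule field_le_epsilon)
    fix \<epsilon> :: real assume "\<epsilon> > 0"
    then obtain N where N: "\<And>n. n \<ge> N \<Longrightarrow> mdist m (x n) l < \<epsilon>"
      using l unfolding M.limitin_metric eventually_sequentially by blast
    have "mdist m (x k) l \<le> mdist m (x k) (x (max N k)) + mdist m (x (max N k)) l"
      using x M.limitin_mspace[OF l] by (intro mdist_triangle) auto
    then show "mdist m (x k) l \<le> b k + \<epsilon>"
      using dist_le[of k "max N k"] N[of "max N k"] by simp
  qed
  then show thesis
    using that M.limitin_mspace[OF l] by blast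
qed

lemma halving_tendsto_0:
  fixes b :: "nat \<Rightarrow> real"
  assumes "\<And>n. 0 \<le> b n" "\<And>n. b (Suc n) \<le> b n / 2"
  shows "b \<longlonglongrightarrow> 0"
proof (rule Lim_null_comparison)
  have "b n \<le> b 0 * (1/2) ^ n" for n
  proof (induction n)
    case (Suc n)
    then show ?case
      using assms(2)[of n] by simp
  qed simp
  then show "\<forall>\<^sub>F n in sequentially. norm (b n) \<le> b 0 * (1/2) ^ n"
    using assms(1) by simp
  show "(\<lambda>n. b 0 * (1/2) ^ n) \<longlonglongrightarrow> 0"
    by (intro tendsto_mult_right_zero LIMSEQ_power_zero) simp
qed

definition stage_start :: "nat \<Rightarrow> real" where
  "stage_start N = 1 - 1 / 2 ^ N"

lemma stage_start_0 [simp]: "stage_start 0 = 0"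
  by (simp add: stage_start_def)

lemma stage_start_less_1: "stage_start N < 1"
  by (simp add: stage_start_def)

lemma stage_start_strict_mono: "stage_start N < stage_start (Suc N)"
  by (simp add: stage_start_def field_simps)

lemma stage_start_mono: "N \<le> M \<Longrightarrow> stage_start N \<le> stage_start M"
  by (simp add: stage_start_def field_simps)

lemma stage_start_exceeds: "s < 1 \<Longrightarrow> \<exists>N. s \<le> stage_start N"
proof -
  assume "s < 1"
  then obtain N where "(1/2::real) ^ N < 1 - s"
    using real_arch_pow_inv[of "1 - s" "1/2"] by auto
  then show ?thesis
    by (intro exI[of _ N]) (simp add: stage_start_def power_one_over)
qed

text \<open>Stage N of an infinite concatenation runs over [stage_start N, stage_start (N+1)],
  an interval of length 1/2^(N+1), reparametrised to [0, 1] by this map.\<close>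

definition stage_time :: "nat \<Rightarrow> real \<Rightarrow> real" where
  "stage_time N s = min 1 (2 ^ Suc N * (s - stage_start N))"

lemma stage_time_start: "stage_time N (stage_start N) = 0"
  by (simp add: stage_time_def)

lemma stage_time_range: "stage_start N \<le> s \<Longrightarrow> stage_time N s \<in> {0..1}"
  by (simp add: stage_time_def)

lemma stage_time_end: "stage_start (Suc N) \<le> s \<Longrightarrow> stage_time N s = 1"
proof -
  assume "stage_start (Suc N) \<le> s"
  then have "2 ^ Suc N * (stage_start (Suc N) - stage_start N) \<le> 2 ^ Suc N * (s - stage_start N)"
    by (intro mult_left_mono) auto
  moreover have "2 ^ Suc N * (stage_start (Suc N) - stage_start N) = (1::real)"
    by (simp add: stage_start_def field_simps)
  ultimately have "1 \<le> 2 ^ Suc N * (s - stage_start N)"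
    by linarith
  then show ?thesis
    by (simp add: stage_time_def)
qed

locale homotopy_chain =
  fixes X :: "'a topology" and d :: "'a metric"
    and K :: "nat \<Rightarrow> real \<times> real \<Rightarrow> 'a" and f :: "nat \<Rightarrow> real \<Rightarrow> 'a" and b :: "nat \<Rightarrow> real"
  assumes mtopology_of_d: "mtopology_of d = X"
    and continuous_K: "continuous_map (top_of_set ({0..1} \<times> {0..1})) X (K k)"
    and K_start: "t \<in> {0..1} \<Longrightarrow> K k (t, 0) = f k t"
    and K_end: "t \<in> {0..1} \<Longrightarrow> K k (t, 1) = f (Suc k) t"
    and mdist_K: "t \<in> {0..1} \<Longrightarrow> s \<in> {0..1} \<Longrightarrow> mdist d (K k (t, s)) (f k t) \<le> b k - b (Suc k)"
    and bound_tendsto_0: "b \<longlonglongrightarrow> 0"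
begin

lemma K_in_mspace: "z \<in> {0..1} \<times> {0..1} \<Longrightarrow> K k z \<in> mspace d"
  using continuous_map_in_mspace[OF continuous_K mtopology_of_d] .

lemma f_in_mspace: "t \<in> {0..1} \<Longrightarrow> f k t \<in> mspace d"
  using K_in_mspace[of "(t, 0)" k] K_start[of t k] by simp

lemma mdist_f_Suc: "t \<in> {0..1} \<Longrightarrow> mdist d (f k t) (f (Suc k) t) \<le> b k - b (Suc k)"
  using mdist_K[of t 1 k] K_end[of t k] by (simp add: mdist_commute)

lemma mdist_f: "t \<in> {0..1} \<Longrightarrow> k \<le> n \<Longrightarrow> mdist d (f k t) (f n t) \<le> b k - b n"
  using mdist_telescoping[where x = "\<lambda>k. f k t"] f_in_mspace mdist_f_Suc by blast

lemma bound_decseq: "decseq b"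
  by (rule telescoping_decseq[where m = d and x = "\<lambda>k. f k 0"]) (simp add: mdist_f_Suc)

lemma bound_nonneg: "0 \<le> b k"
  using decseq_ge[OF bound_decseq bound_tendsto_0] .

lemma limit_path_exists:
  assumes "mcomplete_of d"
  obtains g where "\<And>t. t \<in> {0..1} \<Longrightarrow> g t \<in> mspace d"
    "\<And>t k. t \<in> {0..1} \<Longrightarrow> mdist d (f k t) (g t) \<le> b k"
proof -
  have "\<exists>l. l \<in> mspace d \<and> (\<forall>k. mdist d (f k t) l \<le> b k)" if "t \<in> {0..1}" for t
    using telescoping_limit[OF assms, where x = "\<lambda>k. f k t"] f_in_mspace mdist_f_Suc that
    by (metis bound_tendsto_0)
  then show thesis
    using that by metis
qed

primrec stack :: "nat \<Rightarrow> real \<times> real \<Rightarrow> 'a" where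
  "stack 0 z = f 0 (fst z)"
| "stack (Suc N) z = (if snd z \<le> stage_start N then stack N z else K N (fst z, stage_time N (snd z)))"

lemma stack_eq_f:
  "z \<in> {0..1} \<times> {0..1} \<Longrightarrow> stage_start N \<le> snd z \<Longrightarrow> stack N z = f N (fst z)"
proof (induction N)
  case (Suc N)
  then have "\<not> snd z \<le> stage_start N"
    using stage_start_strict_mono[of N] by linarith
  then show ?case
    using Suc.prems stage_time_end[of N "snd z"] K_end[of "fst z" N] by auto
qed simp


lemma continuous_stack: "continuous_map (top_of_set ({0..1} \<times> {0..1})) X (stack N)"
proof (induction N)
  case 0
  have "continuous_map (top_of_set ({0..1::real} \<times> {0..1::real})) X (\<lambda>z. K 0 (fst z, 0))"
    by (rule continuous_map_top_of_set_compose[OF _ _ continuous_K])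
      (auto intro!: continuous_on_Pair continuous_on_fst continuous_on_id continuous_on_const)
  moreover have "K 0 (fst z, 0) = f 0 (fst z)" if "z \<in> topspace (top_of_set ({0..1} \<times> {0..1}))" for z
    using that K_start by auto
  ultimately show ?case
    unfolding stack.simps by (rule continuous_map_eq)
next
  case (Suc N)
  let ?D = "{0..1::real} \<times> {0..1::real}"
  show ?case
    unfolding stack.simps
  proof (rule continuous_map_cases_le)
    show "continuous_map (top_of_set ?D) euclideanreal snd" "continuous_map (top_of_set ?D) euclideanreal (\<lambda>z. stage_start N)"
      unfolding continuous_map_iff_continuous by (intro continuous_intros)+
    show "continuous_map (subtopology (top_of_set ?D) {z \<in> topspace (top_of_set ?D). snd z \<le> stage_start N}) X (stack N)"
      by (rule continuous_map_from_subtopology[OF Suc.IH])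
    have "continuous_map (top_of_set {z \<in> ?D. stage_start N \<le> snd z}) X (\<lambda>z. K N (fst z, stage_time N (snd z)))"
    proof (rule continuous_map_top_of_set_compose[OF _ _ continuous_K])
      show "continuous_on {z \<in> ?D. stage_start N \<le> snd z} (\<lambda>z. (fst z, stage_time N (snd z)))"
        unfolding stage_time_def by (intro continuous_intros)
      show "(\<lambda>z. (fst z, stage_time N (snd z))) ` {z \<in> ?D. stage_start N \<le> snd z} \<subseteq> ?D"
        using stage_time_range by auto
    qed
    then show "continuous_map (subtopology (top_of_set ?D) {z \<in> topspace (top_of_set ?D). stage_start N \<le> snd z}) X
        (\<lambda>z. K N (fst z, stage_time N (snd z)))"
      by (simp only: subtopology_top_of_set_Collect)
    fix z assume z: "z \<in> topspace (top_of_set ?D)" "snd z = stage_start N"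
    then show "stack N z = K N (fst z, stage_time N (snd z))"
      using stack_eq_f[of z N] K_start[of "fst z" N] by (auto simp: stage_time_start)
  qed
qed

lemma stack_in_mspace: "z \<in> {0..1} \<times> {0..1} \<Longrightarrow> stack N z \<in> mspace d"
  using continuous_map_in_mspace[OF continuous_stack mtopology_of_d] .

lemma stack_stable:
  assumes "snd z \<le> stage_start N"
  shows "N \<le> M \<Longrightarrow> stack M z = stack N z"
proof (induction M rule: dec_induct)
  case (step M)
  then show ?case
    using assms stage_start_mono[of N M] by simp
qed simp

lemma mdist_stack:
  assumes z: "z \<in> {0..1} \<times> {0..1}"
  shows "N \<le> M \<Longrightarrow> mdist d (stack M z) (stack N z) \<le> b N - b M"
proof (induction M rule: dec_induct)
  case base
  show ?case
    using stack_in_mspace[OF z] by simp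
next
  case (step M)
  show ?case
  proof (cases "snd z \<le> stage_start M")
    case True
    then show ?thesis
      using step.IH bound_decseq by (simp add: decseq_Suc_iff) (smt (verit))
  next
    case False
    let ?t = "fst z" and ?\<sigma> = "stage_time M (snd z)"
    have t: "?t \<in> {0..1}" and \<sigma>: "?\<sigma> \<in> {0..1}"
      using z False stage_time_range[of M "snd z"] by auto
    have "stack N z = f N ?t"
      using stack_eq_f[OF z] False stage_start_mono[OF step.hyps(1)] by simp
    moreover have "stack (Suc M) z = K M (?t, ?\<sigma>)"
      using False by simp
    moreover have "mdist d (K M (?t, ?\<sigma>)) (f N ?t) \<le> mdist d (K M (?t, ?\<sigma>)) (f M ?t) + mdist d (f M ?t) (f N ?t)"
      using K_in_mspace[of "(?t, ?\<sigma>)" M] f_in_mspace[OF t] t \<sigma> by (intro mdist_triangle) auto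
    moreover have "mdist d (f M ?t) (f N ?t) \<le> b N - b M"
      using mdist_f[OF t step.hyps(1)] by (simp add: mdist_commute)
    ultimately show ?thesis
      using mdist_K[OF t \<sigma>, of M] by (simp only:)
  qed
qed


definition concatenation :: "(real \<Rightarrow> 'a) \<Rightarrow> real \<times> real \<Rightarrow> 'a" where
  "concatenation g z = (if snd z < 1 then stack (LEAST N. snd z \<le> stage_start N) z else g (fst z))"

lemma concatenation_eq_stack:
  assumes "snd z \<le> stage_start N"
  shows "concatenation g z = stack N z"
proof -
  define L where "L = (LEAST N. snd z \<le> stage_start N)"
  have "L \<le> N" "snd z \<le> stage_start L"
    unfolding L_def using assms by (auto intro: Least_le LeastI)
  then have "stack N z = stack L z"
    using stack_stable by blast
  moreover have "snd z < 1"
    using assms stage_start_less_1[of N] by linarith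
  ultimately show ?thesis
    by (simp add: concatenation_def L_def)
qed

lemma mdist_concatenation_stack:
  assumes g: "\<And>t k. t \<in> {0..1} \<Longrightarrow> mdist d (f k t) (g t) \<le> b k"
    and z: "z \<in> {0..1} \<times> {0..1}"
  shows "mdist d (concatenation g z) (stack N z) \<le> b N"
proof (cases "snd z \<le> stage_start N")
  case True
  then show ?thesis
    using concatenation_eq_stack stack_in_mspace[OF z] bound_nonneg by simp
next
  case False
  then have stack_N: "stack N z = f N (fst z)"
    using stack_eq_f[OF z] by simp
  show ?thesis
  proof (cases "snd z < 1")
    case True
    then obtain M where M: "snd z \<le> stage_start M"
      using stage_start_exceeds by blast
    then have "N \<le> M"
      using False stage_start_mono by (metis nle_le order_trans)
    then show ?thesis
      using mdist_stack[OF z \<open>N \<le> M\<close>] concatenation_eq_stack[OF M] bound_nonneg[of M] by simp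
  next
    case False
    have "fst z \<in> {0..1}"
      using z by auto
    then show ?thesis
      using g[of "fst z" N] False stack_N by (simp add: concatenation_def mdist_commute)
  qed
qed

lemma continuous_concatenation:
  assumes g: "\<And>t k. t \<in> {0..1} \<Longrightarrow> mdist d (f k t) (g t) \<le> b k"
    and g_in_mspace: "\<And>t. t \<in> {0..1} \<Longrightarrow> g t \<in> mspace d"
  shows "continuous_map (top_of_set ({0..1} \<times> {0..1})) X (concatenation g)"
proof -
  interpret M: Metric_space "mspace d" "mdist d"
    by simp
  have "continuous_map (top_of_set ({0..1} \<times> {0..1})) M.mtopology (concatenation g)"
  proof (rule M.continuous_map_uniform_limit[where F = sequentially and f = stack])
    show "\<forall>\<^sub>F N in sequentially. continuous_map (top_of_set ({0..1} \<times> {0..1})) M.mtopology (stack N)"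
      using continuous_stack mtopology_of_d by (simp add: mtopology_of_def)
    fix \<epsilon> :: real assume "\<epsilon> > 0"
    then obtain N0 where N0: "\<And>N. N \<ge> N0 \<Longrightarrow> b N < \<epsilon>"
      using bound_tendsto_0 bound_nonneg unfolding lim_sequentially dist_real_def
      by (metis abs_of_nonneg diff_zero)
    have "concatenation g z \<in> mspace d \<and> mdist d (stack N z) (concatenation g z) < \<epsilon>"
      if "N \<ge> N0" "z \<in> {0..1} \<times> {0..1}" for N z
    proof
      have "fst z \<in> {0..1}"
        using that(2) by auto
      then show "concatenation g z \<in> mspace d"
        using g_in_mspace stack_in_mspace[OF that(2)] by (simp add: concatenation_def)
      show "mdist d (stack N z) (concatenation g z) < \<epsilon>"
        using mdist_concatenation_stack[OF g that(2), of N] N0[OF that(1)]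
        by (simp add: mdist_commute)
    qed
    then show "\<forall>\<^sub>F N in sequentially. \<forall>z\<in>topspace (top_of_set ({0..1} \<times> {0..1})).
        concatenation g z \<in> mspace d \<and> mdist d (stack N z) (concatenation g z) < \<epsilon>"
      unfolding eventually_sequentially by auto
  qed simp
  then show ?thesis
    using mtopology_of_d by (simp add: mtopology_of_def)
qed

lemma limit_separates:
  assumes g: "\<And>t k. t \<in> {0..1} \<Longrightarrow> mdist d (f k t) (g t) \<le> b k"
    and g_in_mspace: "\<And>t. t \<in> {0..1} \<Longrightarrow> g t \<in> mspace d"
    and uv: "u \<in> {0..1}" "v \<in> {0..1}" and sep: "2 * b k < mdist d (f k u) (f k v)"
  shows "g u \<noteq> g v"
proof
  assume "g u = g v"
  have "mdist d (f k u) (f k v) \<le> mdist d (f k u) (g u) + mdist d (g u) (f k v)"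
    using f_in_mspace g_in_mspace uv by (intro mdist_triangle) auto
  also have "\<dots> \<le> 2 * b k"
    using g[OF uv(1), of k] g[OF uv(2), of k] \<open>g u = g v\<close> by (simp add: mdist_commute)
  finally show False
    using sep by linarith
qed


lemma zero_dim_map_limit:
  assumes g: "\<And>t k. t \<in> {0..1} \<Longrightarrow> mdist d (f k t) (g t) \<le> b k"
    and g_in_mspace: "\<And>t. t \<in> {0..1} \<Longrightarrow> g t \<in> mspace d"
    and sep: "\<And>k. \<exists>u\<in>{grid_lo k..grid_hi k}. \<exists>v\<in>{grid_lo k..grid_hi k}.
      2 * b (Suc k) < mdist d (f (Suc k) u) (f (Suc k) v)"
  shows "zero_dim_map (top_of_set {0..1::real}) g"
proof (rule zero_dim_map_if_nowhere_constant)
  fix a c :: real assume "0 \<le> a" "a < c" "c \<le> 1"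
  then obtain k where k: "a \<le> grid_lo k" "grid_hi k \<le> c"
    by (rule grid_subset_interval)
  obtain u v where uv: "u \<in> {grid_lo k..grid_hi k}" "v \<in> {grid_lo k..grid_hi k}"
    and "2 * b (Suc k) < mdist d (f (Suc k) u) (f (Suc k) v)"
    using sep[of k] by blast
  moreover have "u \<in> {a..c}" "v \<in> {a..c}"
    using uv k by auto
  moreover have "u \<in> {0..1}" "v \<in> {0..1}"
    using uv grid_bounds[of k] by auto
  ultimately show "\<exists>u\<in>{a..c}. \<exists>v\<in>{a..c}. g u \<noteq> g v"
    using limit_separates[OF g g_in_mspace] by blast
qed

end

lemma DD00_nonconstant_homotopy_chain:
  assumes DD: "DD_property X 0 0" and d: "mtopology_of d = X"
    and g: "continuous_map (top_of_set {0..1::real}) X g" and "b0 > 0"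
  obtains K f b where "homotopy_chain X d K f b" "f 0 = g" "b 0 = b0"
    "\<And>k. \<exists>u\<in>{grid_lo k..grid_hi k}. \<exists>v\<in>{grid_lo k..grid_hi k}.
       2 * b (Suc k) < mdist d (f (Suc k) u) (f (Suc k) v)"
proof -
  define P where "P n x \<longleftrightarrow> continuous_map (top_of_set {0..1::real}) X (fst x) \<and> 0 < fst (snd x) \<and>
    (n = 0 \<longrightarrow> fst x = g \<and> fst (snd x) = b0)"
    for n :: nat and x :: "(real \<Rightarrow> 'a) \<times> real \<times> (real \<times> real \<Rightarrow> 'a)"
  define Q where "Q n x y \<longleftrightarrow> continuous_map (top_of_set ({0..1::real} \<times> {0..1::real})) X (snd (snd y)) \<and>
    (\<forall>t\<in>{0..1}. snd (snd y) (t, 0) = fst x t \<and> snd (snd y) (t, 1) = fst y t) \<and>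
    (\<forall>t\<in>{0..1}. \<forall>s\<in>{0..1}. mdist d (snd (snd y) (t, s)) (fst x t) \<le> fst (snd x) - fst (snd y)) \<and>
    fst (snd y) \<le> fst (snd x) / 2 \<and>
    (\<exists>u\<in>{grid_lo n..grid_hi n}. \<exists>v\<in>{grid_lo n..grid_hi n}.
       2 * fst (snd y) < mdist d (fst y u) (fst y v))"
    for n :: nat and x y :: "(real \<Rightarrow> 'a) \<times> real \<times> (real \<times> real \<Rightarrow> 'a)"
  have "\<exists>y. P (Suc n) y \<and> Q n x y" if "P n x" for n x
  proof -
    have h: "continuous_map (top_of_set {0..1::real}) X (fst x)" and "fst (snd x) > 0"
      using that unfolding P_def by auto
    obtain K c' where K: "continuous_map (top_of_set ({0..1::real} \<times> {0..1::real})) X K"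
      and "\<And>t. t \<in> {0..1} \<Longrightarrow> K (t, 0) = fst x t"
      and "\<And>t s. t \<in> {0..1} \<Longrightarrow> s \<in> {0..1} \<Longrightarrow> mdist d (K (t, s)) (fst x t) \<le> fst (snd x) - c'"
      and "0 < c'" "c' \<le> fst (snd x) / 2"
      and "\<exists>u\<in>{grid_lo n..grid_hi n}. \<exists>v\<in>{grid_lo n..grid_hi n}. 2 * c' < mdist d (K (u, 1)) (K (v, 1))"
      using DD00_separating_stage[OF DD d h grid_bounds[of n] \<open>fst (snd x) > 0\<close>] by blast
    moreover have "continuous_map (top_of_set {0..1::real}) X (\<lambda>t. K (t, 1))"
      by (rule continuous_map_top_of_set_compose[OF _ _ K]) (auto intro!: continuous_intros)
    ultimately have "P (Suc n) (\<lambda>t. K (t, 1), c', K) \<and> Q n x (\<lambda>t. K (t, 1), c', K)"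
      unfolding P_def Q_def by auto
    then show ?thesis
      by blast
  qed
  moreover have "P 0 (g, b0, undefined)"
    unfolding P_def using g \<open>b0 > 0\<close> by simp
  ultimately obtain F where F: "\<And>n. P n (F n)" "\<And>n. Q n (F n) (F (Suc n))"
    using dependent_nat_choice[of P Q] by blast
  define f where "f n = fst (F n)" for n
  define b where "b n = fst (snd (F n))" for n
  define K where "K n = snd (snd (F (Suc n)))" for n
  have "0 < b n" "b (Suc n) \<le> b n / 2" for n
    using F unfolding P_def Q_def b_def by auto
  then have "b \<longlonglongrightarrow> 0"
    by (intro halving_tendsto_0) (auto intro: less_imp_le)
  then have "homotopy_chain X d K f b"
    using d F(2) unfolding Q_def f_def b_def K_def by unfold_locales auto
  moreover have "f 0 = g" "b 0 = b0"
    using F(1)[of 0] unfolding P_def f_def b_def by auto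
  moreover have "\<exists>u\<in>{grid_lo k..grid_hi k}. \<exists>v\<in>{grid_lo k..grid_hi k}.
       2 * b (Suc k) < mdist d (f (Suc k) u) (f (Suc k) v)" for k
    using F(2)[of k] unfolding Q_def f_def b_def by blast
  ultimately show thesis
    by (rule that)
qed

lemma DD00_zero_dim_approximation:
  assumes DD: "DD_property X 0 0" and d: "mtopology_of d = X" and "mcomplete_of d"
    and g: "continuous_map (top_of_set {0..1::real}) X g" and "b0 > 0"
  obtains g' H where "continuous_map (top_of_set {0..1::real}) X g'"
    "zero_dim_map (top_of_set {0..1::real}) g'"
    "continuous_map (top_of_set ({0..1::real} \<times> {0..1::real})) X H"
    "\<And>t. t \<in> {0..1} \<Longrightarrow> H (t, 0) = g t \<and> H (t, 1) = g' t"
    "\<And>t s. t \<in> {0..1} \<Longrightarrow> s \<in> {0..1} \<Longrightarrow> mdist d (H (t, s)) (g t) \<le> b0"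
proof -
  obtain K f b where "homotopy_chain X d K f b" and f0: "f 0 = g" and b0: "b 0 = b0"
    and sep: "\<And>k. \<exists>u\<in>{grid_lo k..grid_hi k}. \<exists>v\<in>{grid_lo k..grid_hi k}.
       2 * b (Suc k) < mdist d (f (Suc k) u) (f (Suc k) v)"
    using DD00_nonconstant_homotopy_chain[OF DD d g \<open>b0 > 0\<close>] by blast
  interpret homotopy_chain X d K f b
    by fact
  obtain g' where g'_in_mspace: "\<And>t. t \<in> {0..1} \<Longrightarrow> g' t \<in> mspace d"
    and g': "\<And>t k. t \<in> {0..1} \<Longrightarrow> mdist d (f k t) (g' t) \<le> b k"
    using limit_path_exists[OF \<open>mcomplete_of d\<close>] by blast
  let ?H = "concatenation g'"
  have H: "continuous_map (top_of_set ({0..1} \<times> {0..1})) X ?H"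
    by (rule continuous_concatenation[OF g' g'_in_mspace])
  have H1: "?H (t, 1) = g' t" for t
    by (simp add: concatenation_def)
  have "continuous_map (top_of_set {0..1::real}) X (\<lambda>t. ?H (t, 1))"
    by (rule continuous_map_top_of_set_compose[OF _ _ H]) (auto intro!: continuous_intros)
  then have "continuous_map (top_of_set {0..1::real}) X g'"
    by (simp add: H1)
  moreover have "zero_dim_map (top_of_set {0..1::real}) g'"
    using g' g'_in_mspace sep by (rule zero_dim_map_limit)
  moreover note H
  moreover have "?H (t, 0) = g t \<and> ?H (t, 1) = g' t" for t
    using concatenation_eq_stack[of "(t, 0)" 0] f0 H1 by simp
  moreover have "mdist d (?H (t, s)) (g t) \<le> b0" if "t \<in> {0..1}" "s \<in> {0..1}" for t s
    using mdist_concatenation_stack[OF g', of "(t, s)" 0] that f0 b0 by simp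
  ultimately show thesis
    by (rule that)
qed

lemma AP_1_0I:
  assumes approx: "\<And>g b. continuous_map (top_of_set {0..1}) (mtopology_of m) g \<Longrightarrow> b > 0 \<Longrightarrow>
    \<exists>g' H. continuous_map (top_of_set {0..1::real}) (mtopology_of m) g' \<and> zero_dim_map (top_of_set {0..1}) g' \<and>
      continuous_map (top_of_set ({0..1::real} \<times> {0..1::real})) (mtopology_of m) H \<and>
      (\<forall>t\<in>{0..1}. H (t, 0) = g t \<and> H (t, 1) = g' t) \<and>
      (\<forall>t\<in>{0..1}. \<forall>s\<in>{0..1}. mdist m (H (t, s)) (g t) \<le> b)"
  shows "AP_1_0 m"
  unfolding AP_1_0_def
proof (intro allI impI)
  fix \<epsilon> :: real and g :: "real \<Rightarrow> 'a"
  assume "\<epsilon> > 0" and g: "continuous_map (top_of_set {0..1}) (mtopology_of m) g"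
  then obtain g' H where g': "continuous_map (top_of_set {0..1::real}) (mtopology_of m) g'"
      "zero_dim_map (top_of_set {0..1}) g'"
    and H: "continuous_map (top_of_set ({0..1::real} \<times> {0..1::real})) (mtopology_of m) H"
    and ends: "\<forall>t\<in>{0..1}. H (t, 0) = g t \<and> H (t, 1) = g' t"
    and close: "\<And>t s. t \<in> {0..1} \<Longrightarrow> s \<in> {0..1} \<Longrightarrow> mdist m (H (t, s)) (g t) \<le> \<epsilon> / 4"
    using approx[of g "\<epsilon> / 4"] by auto
  have diam: "mdiam m ((\<lambda>s. H (t, s)) ` {0..1}) \<le> 2 * (\<epsilon> / 4)" if "t \<in> {0..1}" for t
  proof (rule mdiam_le)
    show "(\<lambda>s. H (t, s)) ` {0..1} \<subseteq> mspace m" "g t \<in> mspace m"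
      using continuous_map_in_mspace[OF H refl] continuous_map_in_mspace[OF g refl] that by auto
    show "mdist m y (g t) \<le> \<epsilon> / 4" if "y \<in> (\<lambda>s. H (t, s)) ` {0..1}" for y
      using that close[OF \<open>t \<in> {0..1}\<close>] by blast
  qed auto
  show "\<exists>g' h. continuous_map (top_of_set {0..1}) (mtopology_of m) g' \<and>
      zero_dim_map (top_of_set {0..1}) g' \<and>
      continuous_map (prod_topology (top_of_set {0..1::real}) (top_of_set {0..1::real})) (mtopology_of m) h \<and>
      (\<forall>t\<in>{0..1}. h (t, 0) = g t \<and> h (t, 1) = g' t) \<and>
      (\<forall>t\<in>{0..1}. mdiam m ((\<lambda>s. h (t, s)) ` {0..1}) < \<epsilon>)"
  proof (intro exI conjI)
    show "\<forall>t\<in>{0..1}. mdiam m ((\<lambda>s. H (t, s)) ` {0..1}) < \<epsilon>"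
      using diam \<open>\<epsilon> > 0\<close> by fastforce
  qed (use g' H ends in auto)
qed

theorem proposition6p2:
  fixes X :: "'a topology"
  assumes "completely_metrizable_space X"
    and "DD_property X 0 0"
  shows "\<forall>m. mtopology_of m = X \<longrightarrow> AP_1_0 m"
proof (intro allI impI AP_1_0I)
  fix m :: "'a metric" and g :: "real \<Rightarrow> 'a" and b :: real
  assume m: "mtopology_of m = X" and g: "continuous_map (top_of_set {0..1}) (mtopology_of m) g" and "b > 0"
  obtain d where d: "mtopology_of d = X" "mcomplete_of d" and dominates: "\<And>x y. mdist m x y \<le> mdist d x y"
    using completely_metrizable_space_complete_metric_above[OF assms(1) m] by blast
  obtain g' H where g': "continuous_map (top_of_set {0..1::real}) X g'" "zero_dim_map (top_of_set {0..1::real}) g'"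
    and H: "continuous_map (top_of_set ({0..1::real} \<times> {0..1::real})) X H"
    and ends: "\<And>t. t \<in> {0..1} \<Longrightarrow> H (t, 0) = g t \<and> H (t, 1) = g' t"
    and close: "\<And>t s. t \<in> {0..1} \<Longrightarrow> s \<in> {0..1} \<Longrightarrow> mdist d (H (t, s)) (g t) \<le> b"
    using DD00_zero_dim_approximation[OF assms(2) d g[unfolded m] \<open>b > 0\<close>] by blast
  have "mdist m (H (t, s)) (g t) \<le> b" if "t \<in> {0..1}" "s \<in> {0..1}" for t s
    using close[OF that] dominates order_trans by blast
  then show "\<exists>g' H. continuous_map (top_of_set {0..1::real}) (mtopology_of m) g' \<and>
      zero_dim_map (top_of_set {0..1}) g' \<and>
      continuous_map (top_of_set ({0..1::real} \<times> {0..1::real})) (mtopology_of m) H \<and>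
      (\<forall>t\<in>{0..1}. H (t, 0) = g t \<and> H (t, 1) = g' t) \<and> (\<forall>t\<in>{0..1}. \<forall>s\<in>{0..1}. mdist m (H (t, s)) (g t) \<le> b)"
    unfolding m using g' H ends by blast
qed

end
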